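(* Let $\mu$ be a stationary ergodic, elliptic (and non-degenerate) probability measure on $\Omega$. If $\mathbb P^1(S_+)>0$, then $\mathbb P^1(S_-)=0$.
   Context: Notation: $\mathbb N=\{1,2,\dots\}$, $\mathbb Z_+=\{0,1,2,\dots\}$. Cookie environments $\omega\in\Omega=[0,1]^{\mathbb Z\times\mathbb N}$; shift $(\theta\omega)(x,n)=\omega(x+1,n)$; $\mu$ stationary ergodic means $\theta$-invariant and ergodic; elliptic means $\mu((0,1)^{\mathbb Z\times\mathbb N})=1$. Random arrow environment: $a(x,n)=\mathbf 1_{\{u(x,n)<\omega(x,n)\}}$ with $u(x,n)$ i.i.d. Uniform$[0,1]$ independent of $\omega\sim\mu$; $\mathbb P$ denotes the joint law of $(\omega,u)$. A sequence $b\in\{0,1\}^{\mathbb N}$ is non-degenerate if $b(i)\ne b(i+1)$ for infinitely many $i$; $\mu$ is non-degenerate if $\mathbb P$-a.s. every $a(x,\cdot)$ is non-degenerate (this is needed for the processes below to be well defined). For non-degenerate $b$: $U^+_b(0)=0$ and for $x\ge1$, $U^+_b(x)$ is the number of indices $i$ with $b(i)=1$ preceding the $x$-th index $j$ with $b(j)=0$; $U^-_b$ is defined the same way with $0$ and $1$ exchanged. For $y\in\mathbb Z_+$: $Z^+_0=y$, $Z^+_n=U^+_{a(n-1,\cdot)}(Z^+_{n-1})$; $Z^-_0=y$, $Z^-_n=U^-_{a(1-n,\cdot)}(Z^-_{n-1})$. $\mathbb P^y$ denotes $\mathbb P$ applied to events about $Z^\pm$ with initial value $y$. $S_+=\{Z^+_n>0\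 \forall n\ge0\}$, $S_-=\{Z^-_n>0\ \forall n\ge0\}$. *)

theory Defs
  imports "HOL-Probability.Probability" "HOL-Library.Infinite_Set"
begin

definition Idx :: "(int \<times> nat) set" where
  "Idx = UNIV \<times> {1..}"

definition OmegaM :: "(int \<times> nat \<Rightarrow> real) measure" where
  "OmegaM = (\<Pi>\<^sub>M i\<in>Idx. restrict_space borel {0..1::real})"

definition UnifM :: "(int \<times> nat \<Rightarrow> real) measure" where
  "UnifM = (\<Pi>\<^sub>M i\<in>Idx. uniform_measure lborel {0..1::real})"

definition shift :: "(int \<times> nat \<Rightarrow> real) \<Rightarrow> (int \<times> nat \<Rightarrow> real)" where
  "shift \<omega> = (\<lambda>(x, n). \<omega> (x + 1, n))"

definition stationary :: "(int \<times> nat \<Rightarrow> real) measure \<Rightarrow> bool" where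
  "stationary \<mu> \<longleftrightarrow> shift \<in> measurable \<mu> \<mu> \<and> distr \<mu> \<mu> shift = \<mu>"

definition ergodic :: "(int \<times> nat \<Rightarrow> real) measure \<Rightarrow> bool" where
  "ergodic \<mu> \<longleftrightarrow> (\<forall>A\<in>sets \<mu>. shift -` A \<inter> space \<mu> = A \<longrightarrow>
                      measure \<mu> A = 0 \<or> measure \<mu> A = 1)"

definition elliptic :: "(int \<times> nat \<Rightarrow> real) measure \<Rightarrow> bool" where
  "elliptic \<mu> \<longleftrightarrow> emeasure \<mu> {\<omega> \<in> space \<mu>. \<forall>x. \<forall>n\<ge>1. 0 < \<omega> (x, n) \<and> \<omega> (x, n) < 1} = 1"

definition jointP :: "(int \<times> nat \<Rightarrow> real) measure \<Rightarrow> ((int \<times> nat \<Rightarrow> real) \<times> (int \<times> nat \<Rightarrow> real)) measure" where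
  "jointP \<mu> = \<mu> \<Otimes>\<^sub>M UnifM"

text \<open>Arrow environment a(x,.) as a sequence indexed by N (True = 1, False = 0):
  a(x,i) = 1 iff u(x,i) < omega(x,i).\<close>
definition arrow :: "(int \<times> nat \<Rightarrow> real) \<times> (int \<times> nat \<Rightarrow> real) \<Rightarrow> int \<Rightarrow> nat \<Rightarrow> bool" where
  "arrow p x = (\<lambda>i. snd p (x, i) < fst p (x, i))"

definition nondeg_seq :: "(nat \<Rightarrow> bool) \<Rightarrow> bool" where
  "nondeg_seq b \<longleftrightarrow> infinite {i. 1 \<le> i \<and> b i \<noteq> b (Suc i)}"

definition nondeg :: "(int \<times> nat \<Rightarrow> real) measure \<Rightarrow> bool" where
  "nondeg \<mu> \<longleftrightarrow> (AE p in jointP \<mu>. \<forall>x. nondeg_seq (arrow p x))"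

text \<open>U^+_b(0) = 0; for x >= 1, U^+_b(x) = number of i >= 1 with b(i) = 1 preceding
  the x-th index j >= 1 with b(j) = 0 (enumerate is 0-based).\<close>
definition Uplus :: "(nat \<Rightarrow> bool) \<Rightarrow> nat \<Rightarrow> nat" where
  "Uplus b x = (if x = 0 then 0
     else card {i. 1 \<le> i \<and> i < enumerate {j. 1 \<le> j \<and> \<not> b j} (x - 1) \<and> b i})"

definition Uminus :: "(nat \<Rightarrow> bool) \<Rightarrow> nat \<Rightarrow> nat" where
  "Uminus b x = Uplus (\<lambda>i. \<not> b i) x"

primrec Zplus :: "(int \<times> nat \<Rightarrow> real) \<times> (int \<times> nat \<Rightarrow> real) \<Rightarrow> nat \<Rightarrow> nat \<Rightarrow> nat" where
  "Zplus p y 0 = y"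
| "Zplus p y (Suc n) = Uplus (arrow p (int n)) (Zplus p y n)"

primrec Zminus :: "(int \<times> nat \<Rightarrow> real) \<times> (int \<times> nat \<Rightarrow> real) \<Rightarrow> nat \<Rightarrow> nat \<Rightarrow> nat" where
  "Zminus p y 0 = y"
| "Zminus p y (Suc n) = Uminus (arrow p (- int n)) (Zminus p y n)"

definition Splus :: "(int \<times> nat \<Rightarrow> real) measure \<Rightarrow> nat \<Rightarrow> ((int \<times> nat \<Rightarrow> real) \<times> (int \<times> nat \<Rightarrow> real)) set" where
  "Splus \<mu> y = {p \<in> space (jointP \<mu>). \<forall>n. Zplus p y n > 0}"

definition Sminus :: "(int \<times> nat \<Rightarrow> real) measure \<Rightarrow> nat \<Rightarrow> ((int \<times> nat \<Rightarrow> real) \<times> (int \<times> nat \<Rightarrow> real)) set" where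
  "Sminus \<mu> y = {p \<in> space (jointP \<mu>). \<forall>n. Zminus p y n > 0}"

end

theory Submission
  imports Defs
begin

text \<open>
  The arrows turn Z+ and Z- into non-crossing paths: for z, w \<ge> 1 one has
  w \<le> U+_b(z) iff U-_b(w) < z. Hence a forward process surviving from column x and a backward
  process surviving from a column y \<ge> x would have to cross somewhere between x and y.
  By stationarity, the event that Z+ survives from infinitely many columns n \<ge> 0 is
  shift-invariant, and its sections at a fixed environment are tail events of the independent
  columns of u; Kolmogorov's 0-1 law and ergodicity give it probability 0 or 1, hence 1 when
  P^1(S+) > 0. Stationarity also shows that almost surely, if Z- survives from some column \<ge> 0,
  it survives from columns arbitrarily far to the right. On S- these two facts produce a
  surviving backward process to the right of a surviving forward one.
\<close>

type_synonym site_field = "int \<times> nat \<Rightarrow> real"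

lemma card_less_enumerate:
  fixes S :: "nat set"
  assumes "infinite S"
  shows "card {j\<in>S. j < enumerate S k} = k"
proof -
  have "{j\<in>S. j < enumerate S k} = enumerate S ` {..<k}"
  proof (intro equalityI subsetI)
    fix j assume j: "j \<in> {j\<in>S. j < enumerate S k}"
    then obtain i where i: "enumerate S i = j" using enumerate_Ex[OF assms] by blast
    then have "i < k" using j assms by auto
    then show "j \<in> enumerate S ` {..<k}" using i by blast
  qed (use assms in \<open>auto intro: enumerate_in_set\<close>)
  then show ?thesis
    using inj_enumerate[OF assms] by (simp add: card_image inj_on_subset)
qed

lemma enumerate_less_iff_card_less:
  fixes S :: "nat set"
  assumes "infinite S"
  shows "enumerate S k < m \<longleftrightarrow> k < card {j\<in>S. j < m}"
proof
  assume "enumerate S k < m"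
  then have "insert (enumerate S k) {j\<in>S. j < enumerate S k} \<subseteq> {j\<in>S. j < m}"
    using assms by (auto intro: enumerate_in_set)
  from card_mono[OF _ this] show "k < card {j\<in>S. j < m}"
    using card_less_enumerate[OF assms] by simp
next
  assume "k < card {j\<in>S. j < m}"
  moreover have "\<not> enumerate S k < m \<Longrightarrow> card {j\<in>S. j < m} \<le> card {j\<in>S. j < enumerate S k}"
    by (intro card_mono) auto
  ultimately show "enumerate S k < m"
    using card_less_enumerate[OF assms, of k] by linarith
qed

lemma nondeg_seq_infinite:
  assumes "nondeg_seq b"
  shows "infinite {j. 1 \<le> j \<and> b j = v}"
  unfolding infinite_nat_iff_unbounded_le
proof
  fix N
  obtain i where i: "N \<le> i" "1 \<le> i" "b i \<noteq> b (Suc i)"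
    using assms unfolding nondeg_seq_def infinite_nat_iff_unbounded_le by blast
  show "\<exists>j\<ge>N. j \<in> {j. 1 \<le> j \<and> b j = v}"
  proof (cases "b i = v")
    case False
    then have "b (Suc i) = v" using i(3) by auto
    then show ?thesis using i by (intro exI[of _ "Suc i"]) simp
  qed (use i in auto)
qed

lemma nondeg_seq_not [simp]: "nondeg_seq (\<lambda>i. \<not> b i) \<longleftrightarrow> nondeg_seq b"
  by (simp add: nondeg_seq_def)

lemma le_Uplus_iff:
  assumes "nondeg_seq b" "1 \<le> z" "1 \<le> w"
  shows "w \<le> Uplus b z \<longleftrightarrow>
    enumerate {j. 1 \<le> j \<and> b j} (w - 1) < enumerate {j. 1 \<le> j \<and> \<not> b j} (z - 1)"
proof -
  have "Uplus b z = card {j \<in> {j. 1 \<le> j \<and> b j}. j < enumerate {j. 1 \<le> j \<and> \<not> b j} (z - 1)}"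
    using assms(2) unfolding Uplus_def by (auto intro!: arg_cong[where f = card])
  moreover have "infinite {j. 1 \<le> j \<and> b j}"
    using nondeg_seq_infinite[OF assms(1), of True] by simp
  ultimately show ?thesis
    using assms(3) enumerate_less_iff_card_less by (simp add: Suc_le_eq[symmetric])
qed

lemma le_Uplus_iff_Uminus_less:
  assumes "nondeg_seq b" "1 \<le> z" "1 \<le> w"
  shows "w \<le> Uplus b z \<longleftrightarrow> Uminus b w < z"
proof -
  define p where "p = enumerate {j. 1 \<le> j \<and> \<not> b j} (z - 1)"
  define q where "q = enumerate {j. 1 \<le> j \<and> b j} (w - 1)"
  have "infinite {j. 1 \<le> j \<and> \<not> b j}" "infinite {j. 1 \<le> j \<and> b j}"
    using nondeg_seq_infinite[OF assms(1), of False] nondeg_seq_infinite[OF assms(1), of True]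
    by simp_all
  then have "\<not> b p" "b q"
    unfolding p_def q_def using enumerate_in_set by blast+
  then have "p \<noteq> q" by auto
  moreover have "w \<le> Uplus b z \<longleftrightarrow> q < p"
    using le_Uplus_iff[OF assms] p_def q_def by simp
  moreover have "z \<le> Uminus b w \<longleftrightarrow> p < q"
    using le_Uplus_iff[of "\<lambda>i. \<not> b i" w z] assms p_def q_def by (simp add: Uminus_def)
  ultimately show ?thesis by auto
qed

primrec Uplus_chain :: "(nat \<Rightarrow> nat \<Rightarrow> bool) \<Rightarrow> nat \<Rightarrow> nat \<Rightarrow> nat" where
  "Uplus_chain B y 0 = y"
| "Uplus_chain B y (Suc n) = Uplus (B n) (Uplus_chain B y n)"

definition survives :: "(nat \<Rightarrow> nat \<Rightarrow> bool) \<Rightarrow> bool" where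
  "survives B \<longleftrightarrow> (\<forall>n. 0 < Uplus_chain B 1 n)"

lemma Zplus_eq_Uplus_chain: "Zplus p y n = Uplus_chain (\<lambda>k. arrow p (int k)) y n"
  by (induction n) simp_all

lemma Zminus_eq_Uplus_chain: "Zminus p y n = Uplus_chain (\<lambda>k i. \<not> arrow p (- int k) i) y n"
  by (induction n) (simp_all add: Uminus_def)

lemma not_survives_right_and_left:
  fixes A :: "int \<Rightarrow> nat \<Rightarrow> bool"
  assumes nondeg: "\<And>c. nondeg_seq (A c)" and "x \<le> y"
    and right: "survives (\<lambda>k. A (x + int k))"
    and left: "survives (\<lambda>k i. \<not> A (y - int k) i)"
  shows False
proof -
  define R where "R = Uplus_chain (\<lambda>k. A (x + int k)) 1"
  define L where "L = Uplus_chain (\<lambda>k i. \<not> A (y - int k) i) 1"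
  define n where "n = nat (y - x)"
  have R_pos: "0 < R k" and L_pos: "0 < L k" for k
    using right left by (simp_all add: survives_def R_def L_def)
  \<comment> \<open>R k and L (n - k) both enter column x + k; duality keeps R below L.\<close>
  have step: "R (Suc k) < L (n - k)" if "k \<le> n" "R k \<le> L (Suc n - k)" for k
  proof -
    have column: "y - int (n - k) = x + int k" and index: "Suc n - k = Suc (n - k)"
      using that \<open>x \<le> y\<close> by (simp_all add: n_def)
    have "L (Suc n - k) = Uminus (A (x + int k)) (L (n - k))"
      by (simp only: L_def index Uplus_chain.simps column Uminus_def)
    with that(2) have "\<not> L (n - k) \<le> Uplus (A (x + int k)) (R k)"
      using le_Uplus_iff_Uminus_less[OF nondeg] R_pos L_pos by (simp add: Suc_le_eq)
    then show ?thesis by (simp add: R_def)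
  qed
  have "R (Suc k) < L (n - k)" if "k \<le> n" for k
    using that
  proof (induction k)
    case 0
    have "R 0 \<le> L (Suc n)" using L_pos[of "Suc n"] by (simp add: R_def Suc_le_eq)
    then show ?case using step[of 0] by simp
  next
    case (Suc k)
    then show ?case using step[of "Suc k"] by (simp add: Suc_diff_le)
  qed
  from this[of n] show False
    using R_pos[of "Suc n"] by (simp add: L_def)
qed

lemma measurable_enumerate [measurable]:
  fixes F :: "'a \<Rightarrow> nat set"
  assumes "\<And>j. Measurable.pred M (\<lambda>x. j \<in> F x)"
  shows "(\<lambda>x. enumerate (F x) k) \<in> M \<rightarrow>\<^sub>M count_space UNIV"
  using assms
proof (induction k arbitrary: F)
  case 0
  then show ?case by (simp add: enumerate_0)
next
  case (Suc k)
  have "Measurable.pred M (\<lambda>x. j \<in> F x - {LEAST n. n \<in> F x})" for j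
    using Suc.prems by measurable
  from Suc.IH[OF this] show ?case by (simp add: enumerate_Suc)
qed

lemma measurable_Uplus [measurable]:
  assumes "\<And>i. Measurable.pred M (\<lambda>x. b x i)"
  shows "(\<lambda>x. Uplus (b x) z) \<in> M \<rightarrow>\<^sub>M count_space UNIV"
  using assms unfolding Uplus_def by measurable

lemma measurable_Uplus_chain [measurable]:
  assumes "\<And>k i. Measurable.pred M (\<lambda>x. B x k i)"
  shows "(\<lambda>x. Uplus_chain (B x) y n) \<in> M \<rightarrow>\<^sub>M count_space UNIV"
proof (induction n)
  case (Suc n)
  have "(\<lambda>x. Uplus (B x n) m) \<in> M \<rightarrow>\<^sub>M count_space UNIV" for m
    using assms by measurable
  from measurable_compose_countable[OF this Suc.IH] show ?case by simp
qed simp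

lemma pred_survives [measurable]:
  assumes "\<And>k i. Measurable.pred M (\<lambda>x. B x k i)"
  shows "Measurable.pred M (\<lambda>x. survives (B x))"
  using assms unfolding survives_def by measurable

lemma (in finite_measure) measure_limsup_ge:
  assumes "\<And>n. A n \<in> sets M" and "\<And>n. c \<le> measure M (A n)"
  shows "c \<le> measure M (limsup A)"
proof -
  define B where "B m = (\<Union>n\<in>{m..}. A n)" for m
  have "c \<le> measure M (B m)" for m
    using assms finite_measure_mono[of "A m" "B m"] unfolding B_def
    by (fastforce intro: order_trans)
  moreover have "(\<lambda>m. measure M (B m)) \<longlonglongrightarrow> measure M (\<Inter>m. B m)"
    using assms(1) by (intro Lim_measure_decseq) (fastforce simp: B_def decseq_def)+
  ultimately show ?thesis
    unfolding limsup_INF_SUP B_def by (intro LIMSEQ_le_const) auto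
qed

lemma (in finite_measure) AE_mem_subsets_of_equal_measure:
  fixes B :: "nat \<Rightarrow> 'a set"
  assumes "A \<in> sets M" "\<And>m. B m \<in> sets M" "\<And>m. B m \<subseteq> A"
    and "\<And>m. measure M (B m) = measure M A"
  shows "AE x in M. x \<in> A \<longrightarrow> (\<forall>m. x \<in> B m)"
proof -
  have "A - B m \<in> null_sets M" for m
    using assms finite_measure_Diff[of A "B m"] by (simp add: emeasure_eq_measure null_sets_def)
  then have "AE x in M. x \<notin> A - B m" for m
    by (rule AE_not_in)
  then have "AE x in M. \<forall>m. x \<notin> A - B m"
    by (subst AE_all_countable) blast
  then show ?thesis by eventually_elim auto
qed

lemma measure_eq_of_vimage_Suc:
  assumes "T \<in> M \<rightarrow>\<^sub>M M" "distr M M T = M"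
    and "\<And>n. A n \<in> sets M" "\<And>n. T -` A n \<inter> space M = A (Suc n)"
  shows "measure M (A n) = measure M (A 0)"
proof (induction n)
  case (Suc n)
  then show ?case using measure_distr[OF assms(1,3), of n] assms(2,4) by simp
qed simp

abbreviation unit_uniform :: "real measure" where
  "unit_uniform \<equiv> uniform_measure lborel {0..1}"

lemma prob_space_unit_uniform: "prob_space unit_uniform"
  by (rule prob_space_uniform_measure) auto

lemma prob_space_UnifM: "prob_space UnifM"
  unfolding UnifM_def by (rule prob_space_PiM) (rule prob_space_unit_uniform)

lemma space_UnifM: "space UnifM = (\<Pi>\<^sub>E i\<in>Idx. UNIV)"
  unfolding UnifM_def by (simp add: space_PiM)

lemma space_OmegaM: "space OmegaM = (\<Pi>\<^sub>E i\<in>Idx. {0..1})"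
  unfolding OmegaM_def by (simp add: space_PiM)

lemma mem_Idx_iff [simp]: "(c, i) \<in> Idx \<longleftrightarrow> 1 \<le> i"
  by (simp add: Idx_def)

definition shift_index :: "int \<times> nat \<Rightarrow> int \<times> nat" where
  "shift_index = (\<lambda>(x, n). (x + 1, n))"

lemma shift_eq_restrict:
  assumes "u \<in> (\<Pi>\<^sub>E i\<in>Idx. S i)"
  shows "shift u = (\<lambda>i\<in>Idx. u (shift_index i))"
proof
  fix k :: "int \<times> nat"
  obtain x n where k: "k = (x, n)" by (cases k)
  show "shift u k = (\<lambda>i\<in>Idx. u (shift_index i)) k"
    using PiE_arb[OF assms, of "(x + 1, n)"] by (simp add: k shift_def shift_index_def)
qed

lemma measurable_shift_UnifM: "shift \<in> UnifM \<rightarrow>\<^sub>M UnifM"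
proof -
  have "(\<lambda>u. \<lambda>i\<in>Idx. u (shift_index i)) \<in> UnifM \<rightarrow>\<^sub>M UnifM"
    unfolding UnifM_def
    by (rule measurable_restrict)
       (auto simp: shift_index_def Idx_def intro!: measurable_component_singleton)
  then show ?thesis
    by (rule measurable_cong[THEN iffD1, rotated]) (auto simp: space_UnifM shift_eq_restrict)
qed

lemma distr_UnifM_shift: "distr UnifM UnifM shift = UnifM"
proof -
  have "inj_on shift_index Idx" "shift_index \<in> Idx \<rightarrow> Idx"
    by (auto simp: inj_on_def shift_index_def Idx_def)
  from distr_PiM_reindex[OF prob_space_unit_uniform this]
  have "distr UnifM UnifM (\<lambda>u. \<lambda>i\<in>Idx. u (shift_index i)) = UnifM"
    unfolding UnifM_def by simp
  moreover have "distr UnifM UnifM shift = distr UnifM UnifM (\<lambda>u. \<lambda>i\<in>Idx. u (shift_index i))"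
    by (rule distr_cong) (auto simp: space_UnifM shift_eq_restrict)
  ultimately show ?thesis by simp
qed

text \<open>The index (c, 0) lies outside Idx, where both extensional fields are undefined.\<close>

lemma not_arrow_0:
  assumes "fst p \<in> space OmegaM" "snd p \<in> space UnifM"
  shows "\<not> arrow p c 0"
  using PiE_arb[of "fst p" Idx _ "(c, 0)"] PiE_arb[of "snd p" Idx _ "(c, 0)"] assms
  by (simp add: arrow_def space_OmegaM space_UnifM)

lemma indep_vars_PiM_components:
  assumes "\<And>i. i \<in> I \<Longrightarrow> prob_space (M i)" "I \<noteq> {}"
  shows "prob_space.indep_vars (\<Pi>\<^sub>M i\<in>I. M i) M (\<lambda>i x. x i) I"
proof -
  interpret P: prob_space "\<Pi>\<^sub>M i\<in>I. M i" by (rule prob_space_PiM) (rule assms(1))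
  define M' where "M' i = (if i \<in> I then M i else count_space UNIV)" for i
  have components: "(\<lambda>x. x i) \<in> (\<Pi>\<^sub>M i\<in>I. M i) \<rightarrow>\<^sub>M M' i" for i
  proof (cases "i \<in> I")
    case False
    have "(\<lambda>x. undefined) \<in> (\<Pi>\<^sub>M i\<in>I. M i) \<rightarrow>\<^sub>M count_space UNIV" by simp
    then show ?thesis
      unfolding M'_def using False
      by (subst measurable_cong[where g = "\<lambda>x. undefined"]) (auto simp: space_PiM)
  qed (simp add: M'_def)
  have "distr (\<Pi>\<^sub>M i\<in>I. M i) (\<Pi>\<^sub>M i\<in>I. M' i) (\<lambda>x. \<lambda>i\<in>I. x i)
      = (\<Pi>\<^sub>M i\<in>I. distr (\<Pi>\<^sub>M i\<in>I. M i) (M' i) (\<lambda>x. x i))"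
  proof -
    have "distr (\<Pi>\<^sub>M i\<in>I. M i) (\<Pi>\<^sub>M i\<in>I. M i) (\<lambda>x. \<lambda>i\<in>I. x i)
        = distr (\<Pi>\<^sub>M i\<in>I. M i) (\<Pi>\<^sub>M i\<in>I. M i) (\<lambda>x. x)"
      by (rule distr_cong) (auto simp: space_PiM)
    also have "\<dots> = (\<Pi>\<^sub>M i\<in>I. distr (\<Pi>\<^sub>M i\<in>I. M i) (M i) (\<lambda>x. x i))"
      unfolding distr_id using distr_PiM_component[of I M] assms(1) by (intro PiM_cong) auto
    finally show ?thesis
      by (simp add: M'_def cong: PiM_cong)
  qed
  then have "P.indep_vars M' (\<lambda>i x. x i) I"
    using P.indep_vars_iff_distr_eq_PiM[OF assms(2) components] by simp
  then show ?thesis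
    by (rule P.indep_vars_cong[THEN iffD1, rotated 3]) (simp_all add: M'_def)
qed

definition column_index :: "nat \<Rightarrow> (int \<times> nat) set" where
  "column_index k = {int k} \<times> {1..}"

definition column_events :: "nat \<Rightarrow> site_field set set" where
  "column_events k = sigma_sets (space UnifM)
     {(\<lambda>u. restrict u (column_index k)) -` S \<inter> space UnifM
       | S. S \<in> sets (\<Pi>\<^sub>M i\<in>column_index k. unit_uniform)}"

lemma sigma_algebra_column_events: "sigma_algebra (space UnifM) (column_events k)"
  unfolding column_events_def by (rule sigma_algebra_sigma_sets) auto

lemma indep_sets_column_events: "prob_space.indep_sets UnifM column_events UNIV"
proof -
  interpret U: prob_space UnifM by (rule prob_space_UnifM)
  have "U.indep_vars (\<lambda>_. unit_uniform) (\<lambda>i u. u i) Idx"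
    using indep_vars_PiM_components[of Idx "\<lambda>_. unit_uniform"] prob_space_unit_uniform
    unfolding UnifM_def by (auto simp: Idx_def)
  moreover have "column_index k \<subseteq> Idx" for k by (auto simp: column_index_def Idx_def)
  moreover have "disjoint_family column_index" by (auto simp: disjoint_family_on_def column_index_def)
  ultimately have "U.indep_vars (\<lambda>k. \<Pi>\<^sub>M i\<in>column_index k. unit_uniform)
      (\<lambda>k u. restrict (\<lambda>i. u i) (column_index k)) UNIV"
    by (intro U.indep_vars_restrict)
  then show ?thesis unfolding U.indep_vars_def column_events_def by simp
qed

lemma arrow_section_in_column_events:
  assumes "\<omega> \<in> space OmegaM"
  shows "{u \<in> space UnifM. arrow (\<omega>, u) (int k) i} \<in> column_events k"
proof (cases "i = 0")
  case True
  have empty: "{u \<in> space UnifM. arrow (\<omega>, u) (int k) i} = {}"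
    using not_arrow_0[of "(\<omega>, u)" for u] assms True by auto
  show ?thesis unfolding empty column_events_def by (rule sigma_sets.Empty)
next
  case False
  then have i: "(int k, i) \<in> column_index k" by (simp add: column_index_def)
  define S where
    "S = {v \<in> space (\<Pi>\<^sub>M j\<in>column_index k. unit_uniform). v (int k, i) < \<omega> (int k, i)}"
  have "(\<lambda>v. v (int k, i)) \<in> (\<Pi>\<^sub>M j\<in>column_index k. unit_uniform) \<rightarrow>\<^sub>M unit_uniform"
    using i by (rule measurable_component_singleton)
  then have "(\<lambda>v. v (int k, i)) \<in> borel_measurable (\<Pi>\<^sub>M j\<in>column_index k. unit_uniform)"
    by (simp add: measurable_cong_sets[OF refl sets_uniform_measure])
  then have "S \<in> sets (\<Pi>\<^sub>M j\<in>column_index k. unit_uniform)"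
    unfolding S_def by measurable
  moreover have "{u \<in> space UnifM. arrow (\<omega>, u) (int k) i}
      = (\<lambda>u. restrict u (column_index k)) -` S \<inter> space UnifM"
    using i by (auto simp: S_def arrow_def space_PiM)
  ultimately show ?thesis
    unfolding column_events_def by (intro sigma_sets.Basic) blast
qed

definition shift_pair :: "site_field \<times> site_field \<Rightarrow> site_field \<times> site_field" where
  "shift_pair p = (shift (fst p), shift (snd p))"

lemma arrow_shift_pair: "arrow (shift_pair p) c = arrow p (c + 1)"
  by (simp add: shift_pair_def arrow_def shift_def)

locale cookie_environment =
  fixes \<mu> :: "site_field measure"
  assumes prob_space: "prob_space \<mu>"
    and sets_eq: "sets \<mu> = sets OmegaM"
    and stationary: "stationary \<mu>"
begin

abbreviation J :: "(site_field \<times> site_field) measure" where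
  "J \<equiv> jointP \<mu>"

lemma space_eq: "space \<mu> = space OmegaM"
  by (rule sets_eq_imp_space_eq[OF sets_eq])

lemma space_J: "space J = space OmegaM \<times> space UnifM"
  by (simp add: jointP_def space_pair_measure space_eq)

lemma prob_space_J: "prob_space J"
  unfolding jointP_def by (rule prob_space_pair[OF prob_space prob_space_UnifM])

lemma measurable_shift: "shift \<in> \<mu> \<rightarrow>\<^sub>M \<mu>" and distr_shift: "distr \<mu> \<mu> shift = \<mu>"
  using stationary by (simp_all add: stationary_def)

lemma measurable_shift_pair: "shift_pair \<in> J \<rightarrow>\<^sub>M J"
  unfolding shift_pair_def[abs_def] jointP_def
  by (intro measurable_Pair measurable_compose[OF measurable_fst measurable_shift]
      measurable_compose[OF measurable_snd measurable_shift_UnifM])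

lemma distr_shift_pair: "distr J J shift_pair = J"
proof -
  interpret U: prob_space UnifM by (rule prob_space_UnifM)
  have "distr \<mu> \<mu> shift \<Otimes>\<^sub>M distr UnifM UnifM shift = distr J J (\<lambda>(x, y). (shift x, shift y))"
    unfolding jointP_def
    by (intro pair_measure_distr measurable_shift measurable_shift_UnifM)
       (simp add: distr_UnifM_shift U.sigma_finite_measure_axioms)
  then show ?thesis
    by (simp add: distr_shift distr_UnifM_shift shift_pair_def[abs_def] case_prod_beta' jointP_def)
qed

lemma pred_arrow [measurable]: "Measurable.pred J (\<lambda>p. arrow p c i)"
proof (cases "i = 0")
  case True
  then have empty: "{p \<in> space J. arrow p c i} = {}"
    using not_arrow_0 by (auto simp: space_J)
  show ?thesis unfolding pred_def empty by simp
next
  case False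
  have "(\<lambda>\<omega>. \<omega> (c, i)) \<in> OmegaM \<rightarrow>\<^sub>M restrict_space borel {0..1}"
    using False unfolding OmegaM_def by (intro measurable_component_singleton) simp
  then have "(\<lambda>\<omega>. \<omega> (c, i)) \<in> borel_measurable \<mu>"
    unfolding measurable_cong_sets[OF sets_eq refl] measurable_restrict_space2_iff by simp
  moreover have "(\<lambda>u. u (c, i)) \<in> borel_measurable UnifM"
    using False unfolding UnifM_def
    by (auto intro!: measurable_component_singleton
        simp: measurable_cong_sets[OF refl sets_uniform_measure, symmetric])
  ultimately show ?thesis
    unfolding arrow_def jointP_def by measurable
qed

definition right_survival :: "int \<Rightarrow> (site_field \<times> site_field) set" where
  "right_survival x = {p \<in> space J. survives (\<lambda>k. arrow p (x + int k))}"

definition left_survival :: "int \<Rightarrow> (site_field \<times> site_field) set" where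
  "left_survival y = {p \<in> space J. survives (\<lambda>k i. \<not> arrow p (y - int k) i)}"

definition left_survival_beyond :: "nat \<Rightarrow> (site_field \<times> site_field) set" where
  "left_survival_beyond m = (\<Union>n\<in>{m..}. left_survival (int n))"

lemma sets_right_survival [measurable]: "right_survival x \<in> sets J"
  unfolding right_survival_def by measurable

lemma sets_left_survival [measurable]: "left_survival y \<in> sets J"
  unfolding left_survival_def by measurable

lemma sets_left_survival_beyond: "left_survival_beyond m \<in> sets J"
  unfolding left_survival_beyond_def by measurable

lemma shift_pair_in_space: "p \<in> space J \<Longrightarrow> shift_pair p \<in> space J"
  using measurable_space[OF measurable_shift_pair] .

lemma shift_pair_in_right_survival_Suc:
  "p \<in> space J \<Longrightarrow> shift_pair p \<in> right_survival (int n) \<longleftrightarrow> p \<in> right_survival (int (Suc n))"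
  unfolding right_survival_def using shift_pair_in_space
  by (auto simp: arrow_shift_pair ac_simps)

lemma shift_pair_in_left_survival_Suc:
  "p \<in> space J \<Longrightarrow> shift_pair p \<in> left_survival (int n) \<longleftrightarrow> p \<in> left_survival (int (Suc n))"
  unfolding left_survival_def using shift_pair_in_space
  by (auto simp: arrow_shift_pair algebra_simps)

lemma vimage_shift_pair_limsup_right_survival:
  "shift_pair -` limsup (\<lambda>n. right_survival (int n)) \<inter> space J
    = limsup (\<lambda>n. right_survival (int n))"
proof (intro set_eqI)
  fix p
  show "p \<in> shift_pair -` limsup (\<lambda>n. right_survival (int n)) \<inter> space J
    \<longleftrightarrow> p \<in> limsup (\<lambda>n. right_survival (int n))"
  proof (cases "p \<in> space J")
    case True
    then have "(\<exists>\<^sub>F n in sequentially. shift_pair p \<in> right_survival (int n))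
        \<longleftrightarrow> (\<exists>\<^sub>F n in sequentially. p \<in> right_survival (int (Suc n)))"
      by (simp add: shift_pair_in_right_survival_Suc)
    also have "\<dots> \<longleftrightarrow> (\<exists>\<^sub>F n in sequentially. p \<in> right_survival (int n))"
      using eventually_sequentially_Suc[of "\<lambda>n. p \<notin> right_survival (int n)"]
      by (simp add: frequently_def)
    finally show ?thesis
      using True by (simp add: mem_limsup_iff)
  next
    case False
    then show ?thesis
      using frequently_ex by (fastforce simp: mem_limsup_iff right_survival_def)
  qed
qed

lemma vimage_shift_pair_left_survival_beyond:
  "shift_pair -` left_survival_beyond m \<inter> space J = left_survival_beyond (Suc m)"
proof (intro set_eqI)
  fix p
  have "(\<exists>n\<ge>m. p \<in> left_survival (int (Suc n)))
      \<longleftrightarrow> (\<exists>n\<ge>Suc m. p \<in> left_survival (int n))"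
    by (metis Suc_le_D Suc_le_mono)
  then show "p \<in> shift_pair -` left_survival_beyond m \<inter> space J
      \<longleftrightarrow> p \<in> left_survival_beyond (Suc m)"
    using shift_pair_in_left_survival_Suc[of p] sets.sets_into_space[OF sets_left_survival]
    by (auto simp: left_survival_beyond_def)
qed

lemma measure_right_survival: "measure J (right_survival (int n)) = measure J (right_survival 0)"
proof -
  have "shift_pair -` right_survival (int n) \<inter> space J = right_survival (int (Suc n))" for n
    using shift_pair_in_right_survival_Suc sets.sets_into_space[OF sets_right_survival] by blast
  then show ?thesis
    using measure_eq_of_vimage_Suc[OF measurable_shift_pair distr_shift_pair,
        of "\<lambda>n. right_survival (int n)" n] by simp
qed

lemma measure_left_survival_beyond:
  "measure J (left_survival_beyond m) = measure J (left_survival_beyond 0)"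
  using measure_eq_of_vimage_Suc[OF measurable_shift_pair distr_shift_pair,
      of left_survival_beyond]
    sets_left_survival_beyond vimage_shift_pair_left_survival_beyond by blast

lemma tail_events_section_limsup_right_survival:
  assumes \<omega>: "\<omega> \<in> space OmegaM"
  shows "Pair \<omega> -` limsup (\<lambda>n. right_survival (int n))
    \<in> prob_space.tail_events UnifM column_events"
  unfolding prob_space.tail_events_def[OF prob_space_UnifM]
proof
  fix n
  define N where "N = sigma (space UnifM) (\<Union> (column_events ` {n..}))"
  have generators: "\<Union> (column_events ` {n..}) \<subseteq> Pow (space UnifM)"
    unfolding column_events_def by (auto dest: sigma_sets_into_sp[rotated])
  have sets_N: "sets N = sigma_sets (space UnifM) (\<Union> (column_events ` {n..}))"
    and space_N: "space N = space UnifM"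
    unfolding N_def using generators by (simp_all add: sets_measure_of space_measure_of)
  have [measurable]: "Measurable.pred N (\<lambda>u. arrow (\<omega>, u) (int (n + j)) i)" for j i
    unfolding pred_def space_N sets_N
    using arrow_section_in_column_events[OF \<omega>, of "n + j" i] by (intro sigma_sets.Basic) auto
  have frequently_seg:
    "(\<exists>\<^sub>F m in sequentially. P (m + n)) \<longleftrightarrow> (\<exists>\<^sub>F m in sequentially. P m)" for P
    using eventually_sequentially_seg[of "\<lambda>m. \<not> P m" n] by (simp add: frequently_def)
  have "Pair \<omega> -` limsup (\<lambda>n. right_survival (int n))
      = {u \<in> space UnifM. \<exists>\<^sub>F m in sequentially. (\<omega>, u) \<in> right_survival (int m)}"
    using \<omega> frequently_ex by (fastforce simp: mem_limsup_iff right_survival_def space_J)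
  also have "\<dots>
      = {u \<in> space UnifM. \<exists>\<^sub>F m in sequentially. (\<omega>, u) \<in> right_survival (int (m + n))}"
    by (simp only: frequently_seg[of "\<lambda>m. (\<omega>, _) \<in> right_survival (int m)"])
  also have "\<dots>
      = {u \<in> space N. \<forall>M. \<exists>m\<ge>M. survives (\<lambda>k. arrow (\<omega>, u) (int (n + (m + k))))}"
    using \<omega> by (auto simp: frequently_sequentially right_survival_def space_J space_N ac_simps)
  also have "\<dots> \<in> sets N"
    by measurable
  finally show "Pair \<omega> -` limsup (\<lambda>n. right_survival (int n))
      \<in> sigma_sets (space UnifM) (\<Union> (column_events ` {n..}))"
    unfolding sets_N .
qed

lemma emeasure_section_shift:
  assumes "A \<in> sets J" "shift_pair -` A \<inter> space J = A" "\<omega> \<in> space \<mu>"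
  shows "emeasure UnifM (Pair (shift \<omega>) -` A) = emeasure UnifM (Pair \<omega> -` A)"
proof -
  have "Pair \<omega> -` A = shift -` (Pair (shift \<omega>) -` A) \<inter> space UnifM"
  proof (intro set_eqI iffI)
    fix u assume "u \<in> Pair \<omega> -` A"
    then have "(\<omega>, u) \<in> shift_pair -` A \<inter> space J" using assms(2) by simp
    then show "u \<in> shift -` (Pair (shift \<omega>) -` A) \<inter> space UnifM"
      by (simp add: shift_pair_def space_J)
  next
    fix u assume "u \<in> shift -` (Pair (shift \<omega>) -` A) \<inter> space UnifM"
    then have "(\<omega>, u) \<in> shift_pair -` A \<inter> space J"
      using assms(3) by (simp add: shift_pair_def space_J space_eq)
    then show "u \<in> Pair \<omega> -` A" using assms(2) by simp
  qed
  also have "emeasure UnifM \<dots> = emeasure (distr UnifM UnifM shift) (Pair (shift \<omega>) -` A)"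
    using assms(1) by (intro emeasure_distr[symmetric] measurable_shift_UnifM sets_Pair1)
      (simp add: jointP_def)
  finally show ?thesis by (simp add: distr_UnifM_shift)
qed

text \<open>
  Kolmogorov's 0-1 law makes every section of A null or conull, and the set G of environments
  with conull section is shift-invariant, hence trivial by ergodicity.
\<close>

lemma measure_invariant_zero_or_one:
  assumes "ergodic \<mu>" and A: "A \<in> sets J" "shift_pair -` A \<inter> space J = A"
    and tail: "\<And>\<omega>. \<omega> \<in> space \<mu> \<Longrightarrow> Pair \<omega> -` A \<in> prob_space.tail_events UnifM column_events"
  shows "measure J A = 0 \<or> measure J A = 1"
proof -
  interpret U: prob_space UnifM by (rule prob_space_UnifM)
  interpret M: prob_space \<mu> by (rule prob_space)
  interpret P: prob_space J by (rule prob_space_J)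
  have A_pair: "A \<in> sets (\<mu> \<Otimes>\<^sub>M UnifM)" using A(1) by (simp add: jointP_def)
  define G where "G = {\<omega> \<in> space \<mu>. emeasure UnifM (Pair \<omega> -` A) = 1}"
  have section_01: "emeasure UnifM (Pair \<omega> -` A) = indicator G \<omega>" if "\<omega> \<in> space \<mu>" for \<omega>
    using U.kolmogorov_0_1_law[OF sigma_algebra_column_events indep_sets_column_events
        tail[OF that]]
    by (auto simp: G_def U.emeasure_eq_measure that)
  have G: "G \<in> sets \<mu>"
    unfolding G_def using U.measurable_emeasure_Pair[OF A_pair] by measurable
  have "shift -` G \<inter> space \<mu> = G"
    using emeasure_section_shift[OF A] measurable_space[OF measurable_shift] by (auto simp: G_def)
  then have "measure \<mu> G = 0 \<or> measure \<mu> G = 1"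
    using \<open>ergodic \<mu>\<close> G by (simp add: ergodic_def)
  moreover have "emeasure J A = emeasure \<mu> G"
  proof -
    have "emeasure J A = (\<integral>\<^sup>+\<omega>. emeasure UnifM (Pair \<omega> -` A) \<partial>\<mu>)"
      unfolding jointP_def by (rule U.emeasure_pair_measure_alt[OF A_pair])
    also have "\<dots> = (\<integral>\<^sup>+\<omega>. indicator G \<omega> \<partial>\<mu>)"
      by (rule nn_integral_cong) (rule section_01)
    finally show ?thesis using G by simp
  qed
  ultimately show ?thesis
    by (simp add: P.emeasure_eq_measure M.emeasure_eq_measure)
qed

lemma measure_limsup_right_survival:
  assumes "ergodic \<mu>" "measure J (right_survival 0) > 0"
  shows "measure J (limsup (\<lambda>n. right_survival (int n))) = 1"
proof -
  interpret P: prob_space J by (rule prob_space_J)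
  have "measure J (right_survival 0) \<le> measure J (limsup (\<lambda>n. right_survival (int n)))"
    by (rule P.measure_limsup_ge) (simp_all add: measure_right_survival)
  moreover have "measure J (limsup (\<lambda>n. right_survival (int n))) = 0
      \<or> measure J (limsup (\<lambda>n. right_survival (int n))) = 1"
    using assms(1) vimage_shift_pair_limsup_right_survival
      tail_events_section_limsup_right_survival
    by (intro measure_invariant_zero_or_one) (simp_all add: space_eq)
  ultimately show ?thesis using assms(2) by linarith
qed

lemma left_survival_null:
  assumes "ergodic \<mu>" "nondeg \<mu>" "measure J (right_survival 0) > 0"
  shows "left_survival 0 \<in> null_sets J"
proof -
  interpret P: prob_space J by (rule prob_space_J)
  have "AE p in J. p \<in> limsup (\<lambda>n. right_survival (int n))"
    using measure_limsup_right_survival[OF assms(1,3)] by (intro P.AE_prob_1) simp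
  moreover have "AE p in J. p \<in> left_survival_beyond 0 \<longrightarrow> (\<forall>m. p \<in> left_survival_beyond m)"
    using sets_left_survival_beyond measure_left_survival_beyond
    by (intro P.AE_mem_subsets_of_equal_measure) (auto simp: left_survival_beyond_def)
  moreover have "AE p in J. \<forall>x. nondeg_seq (arrow p x)"
    using assms(2) by (simp add: nondeg_def)
  ultimately have "AE p in J. p \<notin> left_survival 0"
  proof eventually_elim
    case (elim p)
    show "p \<notin> left_survival 0"
    proof
      assume "p \<in> left_survival 0"
      then have "p \<in> left_survival_beyond 0"
        unfolding left_survival_beyond_def by (intro UN_I[of 0]) simp_all
      then have "p \<in> left_survival_beyond m" for m
        using elim(2) by blast
      moreover obtain x :: nat where "p \<in> right_survival (int x)"
        using elim(1) by (auto simp: mem_limsup_iff dest: frequently_ex)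
      ultimately obtain y where "x \<le> y" "p \<in> left_survival (int y)"
        by (auto simp: left_survival_beyond_def)
      then show False
        using not_survives_right_and_left[of "arrow p" "int x" "int y"] elim(3)
          \<open>p \<in> right_survival (int x)\<close> by (simp add: right_survival_def left_survival_def)
    qed
  qed
  then show ?thesis
    by (simp add: AE_iff_null_sets sets_left_survival left_survival_def)
qed

end

theorem proposition4p1:
  fixes \<mu> :: "(int \<times> nat \<Rightarrow> real) measure"
  assumes "prob_space \<mu>"
    and "sets \<mu> = sets OmegaM"
    and "stationary \<mu>"
    and "ergodic \<mu>"
    and "elliptic \<mu>"
    and "nondeg \<mu>"
    and "measure (jointP \<mu>) (Splus \<mu> 1) > 0"
  shows "Sminus \<mu> 1 \<in> sets (jointP \<mu>) \<and> measure (jointP \<mu>) (Sminus \<mu> 1) = 0"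
proof -
  interpret cookie_environment \<mu>
    using assms(1-3) by (rule cookie_environment.intro)
  have "Splus \<mu> 1 = right_survival 0"
    by (simp add: Splus_def right_survival_def survives_def Zplus_eq_Uplus_chain)
  moreover have "Sminus \<mu> 1 = left_survival 0"
    by (simp add: Sminus_def left_survival_def survives_def Zminus_eq_Uplus_chain)
  ultimately have "Sminus \<mu> 1 \<in> null_sets (jointP \<mu>)"
    using left_survival_null assms(4,6,7) by simp
  then show ?thesis
    by (simp add: measure_def null_setsD1 null_setsD2)
qed

end
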